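(* Let $\theta>0$ and $\gamma:=\frac{\sqrt{2\theta}(1+i)}{2}$. If $S=\sum_{p=0}^\infty a_{p,p}\gamma^{-2p}x^py^p\in A^\infty(\mathbb{R}^2_\theta)$ satisfies $S^2=S=S^*$, then $S=0$ or $S=1$.
   Context: $A^\infty(\mathbb{R}^2_\theta)$ is the algebra of formal series $\sum_{p,q\geq 0}c_{p,q}x^py^q$ with complex coefficients of Schwartz class on $\mathbb{N}^2$ (for every $r\geq1$, $\sup_{p,q}(1+p^2+q^2)^r|c_{p,q}|<\infty$), where $x,y$ are self-adjoint with $yx=xy+i\theta$ (i.e. $[x,y]=-i\theta$); products are computed by reordering into the normal form $x^py^q$ via this relation, and $(c\,x^py^q)^*=\bar c\,y^qx^p$. *)

theory Defs
  imports Complex_Main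
begin

text \<open>Elements of the algebra A-infinity(R^2_theta) are represented by their
coefficient functions c, standing for the formal series sum of c p q x^p y^q
(normal order, x to the left of y).\<close>

definition schwartz :: "(nat \<Rightarrow> nat \<Rightarrow> complex) \<Rightarrow> bool" where
  "schwartz c \<longleftrightarrow>
     (\<forall>r::nat. r \<ge> 1 \<longrightarrow>
        (\<exists>B::real. \<forall>p q. (1 + real p ^ 2 + real q ^ 2) ^ r * norm (c p q) \<le> B))"

text \<open>Reordering coefficient: with yx = xy + i theta one has
  y^q x^r = sum_k k! (q choose k) (r choose k) (i theta)^k x^(r-k) y^(q-k).\<close>

definition reorder :: "real \<Rightarrow> nat \<Rightarrow> nat \<Rightarrow> nat \<Rightarrow> complex" where
  "reorder \<theta> q r k =
     of_nat (fact k * (q choose k) * (r choose k)) * (\<i> * complex_of_real \<theta>) ^ k"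

text \<open>The k-th contribution to the coefficient of x^m y^n in the product
  (sum c p q x^p y^q)(sum d r s x^r y^s): terms with p + r - k = m, q + s - k = n.\<close>

definition prod_term ::
  "real \<Rightarrow> (nat \<Rightarrow> nat \<Rightarrow> complex) \<Rightarrow> (nat \<Rightarrow> nat \<Rightarrow> complex) \<Rightarrow> nat \<Rightarrow> nat \<Rightarrow> nat \<Rightarrow> complex"
  where
  "prod_term \<theta> c d m n k =
     (\<Sum>p\<le>m. \<Sum>s\<le>n. c p (n - s + k) * d (m - p + k) s * reorder \<theta> (n - s + k) (m - p + k) k)"

definition is_product ::
  "real \<Rightarrow> (nat \<Rightarrow> nat \<Rightarrow> complex) \<Rightarrow> (nat \<Rightarrow> nat \<Rightarrow> complex) \<Rightarrow> (nat \<Rightarrow> nat \<Rightarrow> complex) \<Rightarrow> bool"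
  where
  "is_product \<theta> c d e \<longleftrightarrow> (\<forall>m n. (\<lambda>k. prod_term \<theta> c d m n k) sums e m n)"

text \<open>e is the adjoint of c: (c x^p y^q)^* = conj c y^q x^p, reordered.\<close>

definition is_adjoint ::
  "real \<Rightarrow> (nat \<Rightarrow> nat \<Rightarrow> complex) \<Rightarrow> (nat \<Rightarrow> nat \<Rightarrow> complex) \<Rightarrow> bool" where
  "is_adjoint \<theta> c e \<longleftrightarrow>
     (\<forall>m n. (\<lambda>k. cnj (c (m + k) (n + k)) * reorder \<theta> (n + k) (m + k) k) sums e m n)"

definition one_series :: "nat \<Rightarrow> nat \<Rightarrow> complex" where
  "one_series p q = (if p = 0 \<and> q = 0 then 1 else 0)"

end

theory Submission
  imports Defs
begin

(* Diagonal series sum sigma_p x^p y^p behave like functions of the number operator: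
   representing x by the creation operator a^+ and y by i theta a, the N-th number state
   gives the functional number_state_eval theta N, which sends x^n y^n to
   (i theta)^n N!/(N-n)! and is multiplicative on diagonal series. For a projection S
   every such value is 0 or 1, so by binomial inversion the numbers
   b_n = n! (i theta)^n sigma_n are integers. The constant coefficient of S^* is a
   convergent series whose terms have modulus |b_n|, so b, and with it sigma, has finite
   support; comparing top coefficients in S^2 = S then kills every sigma_n with n > 0. *)

(* Matchings of size k between p and s points: the ways to contract k of the y's with k of
   the x's when y^p x^s is brought to normal order. *)
definition contractions :: "nat \<Rightarrow> nat \<Rightarrow> nat \<Rightarrow> nat" where
  "contractions p s k = fact k * (p choose k) * (s choose k)"

lemma contractions_eq_0: "p < k \<or> s < k \<Longrightarrow> contractions p s k = 0"
  by (auto simp: contractions_def binomial_eq_0)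

lemma reorder_eq_contractions:
  "reorder \<theta> p s k = of_nat (contractions p s k) * (\<i> * of_real \<theta>) ^ k"
  by (simp add: reorder_def contractions_def)

lemma falling_factorial_add:
  "(N choose (p + j)) * fact (p + j) = (N choose p) * fact p * (((N - p) choose j) * fact j)"
proof (cases "p + j \<le> N")
  case True
  have "real ((N choose p) * fact p * (((N - p) choose j) * fact j)) =
      (fact p * real (N choose p)) * (fact j * real ((N - p) choose j))"
    by (simp add: mult_ac)
  also have "\<dots> = fact N / fact (N - p) * (fact (N - p) / fact (N - p - j))"
    using True by (simp add: fact_binomial)
  also have "\<dots> = fact (p + j) * real (N choose (p + j))"
    using True by (simp add: fact_binomial diff_diff_add)
  finally have "real ((N choose (p + j)) * fact (p + j)) =
      real ((N choose p) * fact p * (((N - p) choose j) * fact j))"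
    by (simp add: mult_ac)
  then show ?thesis
    by (simp only: of_nat_eq_iff)
next
  case False
  then show ?thesis by (cases "p \<le> N") (simp_all add: binomial_eq_0)
qed

lemma falling_factorial_mult:
  "(N choose p) * fact p * ((N choose s) * fact s) =
     (\<Sum>k\<le>s. contractions p s k * ((N choose (p + s - k)) * fact (p + s - k)))"
proof (cases "p \<le> N")
  case True
  have "(N choose p) * fact p * ((N choose s) * fact s) =
      (\<Sum>k\<le>s. (N choose p) * fact p * (p choose k) * ((N - p) choose (s - k)) * fact s)"
    using vandermonde[of p "N - p" s, symmetric] True
    by (simp add: sum_distrib_left sum_distrib_right mult_ac)
  also have "\<dots> = (\<Sum>k\<le>s. contractions p s k * ((N choose (p + s - k)) * fact (p + s - k)))"
  proof (rule sum.cong[OF refl])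
    fix k assume "k \<in> {..s}"
    then have k: "k \<le> s" by simp
    have "fact s = fact k * fact (s - k) * (s choose k)"
      using binomial_fact_lemma[OF k] by simp
    moreover have "(N choose (p + (s - k))) * fact (p + (s - k)) =
        (N choose p) * fact p * (((N - p) choose (s - k)) * fact (s - k))"
      by (rule falling_factorial_add)
    moreover have "p + (s - k) = p + s - k"
      using k by simp
    ultimately show "(N choose p) * fact p * (p choose k) * ((N - p) choose (s - k)) * fact s =
        contractions p s k * ((N choose (p + s - k)) * fact (p + s - k))"
      by (simp add: contractions_def mult_ac)
  qed
  finally show ?thesis .
qed (simp add: binomial_eq_0)

lemma falling_factorial_mult_by_degree:
  "(N choose p) * fact p * ((N choose s) * fact s) =
     (\<Sum>n\<le>N. if n \<le> p + s then (N choose n) * fact n * contractions p s (p + s - n) else 0)"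
proof -
  define g where "g n = (N choose n) * fact n * contractions p s (p + s - n)" for n
  have "(\<Sum>n\<le>N. if n \<le> p + s then g n else 0) =
      (\<Sum>n\<le>N + (p + s). if n \<le> p + s then g n else 0)"
    by (rule sum.mono_neutral_left) (auto simp: g_def binomial_eq_0)
  also have "\<dots> = (\<Sum>n\<le>p + s. g n)"
    by (rule sum.mono_neutral_cong_right) auto
  also have "\<dots> = (\<Sum>k\<le>p + s. g (p + s - k))"
    by (simp add: atMost_atLeast0 sum.atLeastAtMost_rev[of g 0 "p + s"])
  also have "\<dots> = (\<Sum>k\<le>s. g (p + s - k))"
    by (rule sum.mono_neutral_right) (auto simp: g_def contractions_eq_0)
  also have "\<dots> = (N choose p) * fact p * ((N choose s) * fact s)"
    unfolding falling_factorial_mult by (rule sum.cong) (auto simp: g_def)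
  finally show ?thesis
    unfolding g_def by (rule sym)
qed

lemma sum_atMost_square_restrict:
  fixes n N :: nat
  assumes "n \<le> N" and "\<And>p s. n < p \<or> n < s \<Longrightarrow> f p s = 0"
  shows "(\<Sum>p\<le>N. \<Sum>s\<le>N. f p s) = (\<Sum>p\<le>n. \<Sum>s\<le>n. f p s)"
  using assms unfolding sum.cartesian_product
  by (intro sum.mono_neutral_right) (auto simp flip: not_le)

definition diag_series :: "(nat \<Rightarrow> complex) \<Rightarrow> nat \<Rightarrow> nat \<Rightarrow> complex" where
  "diag_series \<sigma> p q = (if p = q then \<sigma> p else 0)"

definition diag_mult ::
  "real \<Rightarrow> (nat \<Rightarrow> complex) \<Rightarrow> (nat \<Rightarrow> complex) \<Rightarrow> nat \<Rightarrow> complex" where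
  "diag_mult \<theta> \<sigma> \<tau> n =
     (\<Sum>p\<le>n. \<Sum>s\<le>n. if n \<le> p + s then \<sigma> p * \<tau> s * reorder \<theta> p s (p + s - n) else 0)"

lemma prod_term_diag_series:
  "prod_term \<theta> (diag_series \<sigma>) (diag_series \<tau>) n n k =
    (\<Sum>p\<le>n. \<Sum>s\<le>n. if p + s = n + k then \<sigma> p * \<tau> s * reorder \<theta> p s k else 0)"
  unfolding prod_term_def
proof (intro sum.cong refl)
  fix p s assume "p \<in> {..n}" "s \<in> {..n}"
  then show "diag_series \<sigma> p (n - s + k) * diag_series \<tau> (n - p + k) s
        * reorder \<theta> (n - s + k) (n - p + k) k =
      (if p + s = n + k then \<sigma> p * \<tau> s * reorder \<theta> p s k else 0)"
    by (cases "p + s = n + k") (auto simp: diag_series_def)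
qed

lemma is_product_diag_series:
  assumes "is_product \<theta> (diag_series \<sigma>) (diag_series \<tau>) U"
  shows "U n n = diag_mult \<theta> \<sigma> \<tau> n"
proof -
  have "(\<lambda>k. prod_term \<theta> (diag_series \<sigma>) (diag_series \<tau>) n n k) sums U n n"
    using assms by (simp add: is_product_def)
  moreover have "(\<lambda>k. prod_term \<theta> (diag_series \<sigma>) (diag_series \<tau>) n n k) sums
      (\<Sum>k\<le>n. prod_term \<theta> (diag_series \<sigma>) (diag_series \<tau>) n n k)"
    by (rule sums_finite) (auto simp: prod_term_diag_series intro!: sum.neutral)
  ultimately have "U n n = (\<Sum>k\<le>n. prod_term \<theta> (diag_series \<sigma>) (diag_series \<tau>) n n k)"
    by (rule sums_unique2)
  also have "\<dots> = (\<Sum>p\<le>n. \<Sum>s\<le>n. \<Sum>k\<le>n. if p + s = n + k then \<sigma> p * \<tau> s * reorder \<theta> p s k else 0)"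
    unfolding prod_term_diag_series
    by (rule trans[OF sum.swap sum.cong[OF refl sum.swap]])
  also have "\<dots> = diag_mult \<theta> \<sigma> \<tau> n"
    unfolding diag_mult_def
  proof (intro sum.cong refl)
    fix p s assume "p \<in> {..n}" "s \<in> {..n}"
    then have "p + s = n + k \<longleftrightarrow> n \<le> p + s \<and> k = p + s - n" "p + s - n \<le> n" for k
      by auto
    then show "(\<Sum>k\<le>n. if p + s = n + k then \<sigma> p * \<tau> s * reorder \<theta> p s k else 0) =
        (if n \<le> p + s then \<sigma> p * \<tau> s * reorder \<theta> p s (p + s - n) else 0)"
      by (cases "n \<le> p + s") simp_all
  qed
  finally show ?thesis .
qed

definition number_state_eval :: "real \<Rightarrow> nat \<Rightarrow> (nat \<Rightarrow> complex) \<Rightarrow> complex" where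
  "number_state_eval \<theta> N \<sigma> = (\<Sum>n\<le>N. of_nat ((N choose n) * fact n) * (\<i> * of_real \<theta>) ^ n * \<sigma> n)"

lemma number_state_eval_diag_mult:
  "number_state_eval \<theta> N (diag_mult \<theta> \<sigma> \<tau>) = number_state_eval \<theta> N \<sigma> * number_state_eval \<theta> N \<tau>"
proof -
  define c where "c = \<i> * complex_of_real \<theta>"
  define w where "w n p s = (if n \<le> p + s
      then of_nat ((N choose n) * fact n * contractions p s (p + s - n)) * c ^ (p + s) * \<sigma> p * \<tau> s
      else 0)" for n p s
  have w_vanishes: "w n p s = 0" if "n < p \<or> n < s" for n p s
  proof -
    have "s < p + s - n \<or> p < p + s - n \<or> \<not> n \<le> p + s"
      using that by linarith
    then show ?thesis by (auto simp: w_def contractions_eq_0)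
  qed
  have "number_state_eval \<theta> N \<sigma> * number_state_eval \<theta> N \<tau> =
      (\<Sum>p\<le>N. \<Sum>s\<le>N.
        of_nat ((N choose p) * fact p * ((N choose s) * fact s)) * c ^ (p + s) * \<sigma> p * \<tau> s)"
    unfolding number_state_eval_def sum_product c_def[symmetric]
    by (intro sum.cong refl) (simp add: power_add mult_ac)
  also have "\<dots> = (\<Sum>p\<le>N. \<Sum>s\<le>N. \<Sum>n\<le>N. w n p s)"
    unfolding falling_factorial_mult_by_degree of_nat_sum sum_distrib_right
    by (intro sum.cong refl) (simp add: w_def)
  also have "\<dots> = (\<Sum>n\<le>N. \<Sum>p\<le>N. \<Sum>s\<le>N. w n p s)"
    by (rule trans[OF sum.cong[OF refl sum.swap] sum.swap])
  also have "\<dots> = (\<Sum>n\<le>N. \<Sum>p\<le>n. \<Sum>s\<le>n. w n p s)"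
    by (intro sum.cong refl sum_atMost_square_restrict w_vanishes) auto
  also have "\<dots> = number_state_eval \<theta> N (diag_mult \<theta> \<sigma> \<tau>)"
    unfolding number_state_eval_def diag_mult_def sum_distrib_left
  proof (intro sum.cong refl)
    fix n p s
    show "w n p s = of_nat ((N choose n) * fact n) * (\<i> * complex_of_real \<theta>) ^ n *
        (if n \<le> p + s then \<sigma> p * \<tau> s * reorder \<theta> p s (p + s - n) else 0)"
    proof (cases "n \<le> p + s")
      case True
      then have "c ^ (p + s) = c ^ n * c ^ (p + s - n)"
        by (simp flip: power_add)
      then show ?thesis
        using True unfolding reorder_eq_contractions c_def[symmetric] by (simp add: w_def mult_ac)
    qed (simp add: w_def)
  qed
  finally show ?thesis by (rule sym)
qed

lemma number_state_eval_idempotent: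
  assumes "diag_mult \<theta> \<sigma> \<sigma> = \<sigma>"
  shows "number_state_eval \<theta> N \<sigma> \<in> {0, 1}"
proof -
  have "number_state_eval \<theta> N \<sigma> * (number_state_eval \<theta> N \<sigma> - 1) = 0"
    using number_state_eval_diag_mult[of \<theta> N \<sigma> \<sigma>] assms by (simp add: algebra_simps)
  then show ?thesis by simp
qed

lemma binomial_transform_Ints_imp_Ints:
  fixes b :: "nat \<Rightarrow> 'a::ring_1"
  assumes "\<And>N. (\<Sum>n\<le>N. of_nat (N choose n) * b n) \<in> \<int>"
  shows "b n \<in> \<int>"
proof (induction n rule: less_induct)
  case (less n)
  have "b n = (\<Sum>k\<le>n. of_nat (n choose k) * b k) - (\<Sum>k<n. of_nat (n choose k) * b k)"
    by (simp add: lessThan_Suc_atMost[symmetric])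
  also have "\<dots> \<in> \<int>"
    using less by (intro Ints_diff assms Ints_sum Ints_mult) auto
  finally show ?case .
qed

lemma diag_mult_idempotent_scaled_coeff_Ints:
  assumes "diag_mult \<theta> \<sigma> \<sigma> = \<sigma>"
  shows "of_nat (fact n) * (\<i> * of_real \<theta>) ^ n * \<sigma> n \<in> \<int>"
proof (rule binomial_transform_Ints_imp_Ints)
  fix N
  show "(\<Sum>n\<le>N. of_nat (N choose n) * (of_nat (fact n) * (\<i> * of_real \<theta>) ^ n * \<sigma> n)) \<in> \<int>"
    using number_state_eval_idempotent[OF assms, of N] by (auto simp: number_state_eval_def mult.assoc)
qed

lemma is_adjoint_diag_series_scaled_coeff_tendsto_zero:
  assumes "is_adjoint \<theta> (diag_series \<sigma>) T"
  shows "(\<lambda>n. of_nat (fact n) * (\<i> * of_real \<theta>) ^ n * \<sigma> n) \<longlonglongrightarrow> 0"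
proof -
  have "(\<lambda>k. cnj (\<sigma> k) * reorder \<theta> k k k) sums T 0 0"
    using assms[unfolded is_adjoint_def, rule_format, of 0 0] by (simp add: diag_series_def)
  then have "(\<lambda>k. norm (cnj (\<sigma> k) * reorder \<theta> k k k)) \<longlonglongrightarrow> 0"
    by (intro tendsto_norm_zero summable_LIMSEQ_zero sums_summable)
  moreover have "norm (cnj (\<sigma> k) * reorder \<theta> k k k) =
      norm (of_nat (fact k) * (\<i> * of_real \<theta>) ^ k * \<sigma> k)" for k
    by (simp add: reorder_def norm_mult norm_power)
  ultimately show ?thesis
    by (simp add: tendsto_norm_zero_iff)
qed

lemma Ints_tendsto_zero_eventually_zero:
  fixes b :: "nat \<Rightarrow> 'a::real_normed_algebra_1"
  assumes "\<And>n. b n \<in> \<int>" and "b \<longlonglongrightarrow> 0"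
  shows "eventually (\<lambda>n. b n = 0) sequentially"
proof -
  have "eventually (\<lambda>n. norm (b n) < 1) sequentially"
    using assms(2) by (intro order_tendstoD) (auto intro: tendsto_norm_zero)
  then show ?thesis
  proof (rule eventually_mono)
    fix n assume "norm (b n) < 1"
    moreover obtain z where "b n = of_int z"
      using assms(1) by (auto elim: Ints_cases)
    ultimately show "b n = 0" by simp
  qed
qed

lemma diag_mult_top_coeff:
  assumes "\<And>k. m < k \<Longrightarrow> \<sigma> k = 0" and "\<And>k. m < k \<Longrightarrow> \<tau> k = 0"
  shows "diag_mult \<theta> \<sigma> \<tau> (2 * m) = \<sigma> m * \<tau> m"
proof -
  have "diag_mult \<theta> \<sigma> \<tau> (2 * m) =
      (\<Sum>p\<le>2 * m. \<Sum>s\<le>2 * m. if p = m \<and> s = m then \<sigma> m * \<tau> m else 0)"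
    unfolding diag_mult_def
  proof (intro sum.cong refl)
    fix p s
    show "(if 2 * m \<le> p + s then \<sigma> p * \<tau> s * reorder \<theta> p s (p + s - 2 * m) else 0) =
        (if p = m \<and> s = m then \<sigma> m * \<tau> m else 0)"
      by (cases "m < p \<or> m < s") (auto simp: assms reorder_def)
  qed
  also have "\<dots> = (\<Sum>p\<le>2 * m. if p = m then \<sigma> m * \<tau> m else 0)"
    by (intro sum.cong refl) simp
  also have "\<dots> = \<sigma> m * \<tau> m"
    by simp
  finally show ?thesis .
qed

lemma diag_mult_idempotent_finite_support:
  assumes idem: "diag_mult \<theta> \<sigma> \<sigma> = \<sigma>" and support: "\<And>k. K \<le> k \<Longrightarrow> \<sigma> k = 0"
    and "0 < k"
  shows "\<sigma> k = 0"
  using support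
proof (induction K)
  case 0
  then show ?case by simp
next
  case (Suc m)
  show ?case
  proof (cases "m = 0")
    case True
    then show ?thesis using Suc.prems \<open>0 < k\<close> by simp
  next
    case False
    have above: "\<sigma> j = 0" if "m < j" for j
      using Suc.prems that by simp
    have "\<sigma> m * \<sigma> m = diag_mult \<theta> \<sigma> \<sigma> (2 * m)"
      by (simp add: diag_mult_top_coeff above)
    also have "\<dots> = 0"
      using idem above False by simp
    finally have "\<sigma> m = 0" by simp
    then show ?thesis
      using Suc.IH above by (metis le_neq_implies_less)
  qed
qed

theorem proposition3p2:
  fixes \<theta> :: real and \<gamma> :: complex and a :: "nat \<Rightarrow> complex"
    and S :: "nat \<Rightarrow> nat \<Rightarrow> complex"
  assumes "\<theta> > 0"
    and "\<gamma> = complex_of_real (sqrt (2 * \<theta>)) * (1 + \<i>) / 2"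
    and "\<And>p q. S p q = (if p = q then a p * inverse (\<gamma> ^ (2 * p)) else 0)"
    and "schwartz S"
    and "is_product \<theta> S S S"
    and "is_adjoint \<theta> S S"
  shows "S = (\<lambda>p q. 0) \<or> S = one_series"
proof -
  (* Only the diagonal shape of S is used: neither the value of gamma nor the Schwartz
     decay is needed, since the adjoint relation alone forces the coefficients to vanish. *)
  define \<sigma> where "\<sigma> p = S p p" for p
  have S_eq: "S = diag_series \<sigma>"
    by (simp add: fun_eq_iff diag_series_def \<sigma>_def assms(3))
  have idem: "diag_mult \<theta> \<sigma> \<sigma> = \<sigma>"
    using is_product_diag_series[OF assms(5)[unfolded S_eq]] by (simp add: fun_eq_iff diag_series_def)
  have "eventually (\<lambda>n. of_nat (fact n) * (\<i> * of_real \<theta>) ^ n * \<sigma> n = 0) sequentially"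
    using diag_mult_idempotent_scaled_coeff_Ints[OF idem]
      is_adjoint_diag_series_scaled_coeff_tendsto_zero[OF assms(6)[unfolded S_eq]]
    by (rule Ints_tendsto_zero_eventually_zero)
  then obtain K where "\<sigma> k = 0" if "K \<le> k" for k
    using assms(1) by (auto simp: eventually_sequentially)
  then have "\<sigma> k = 0" if "0 < k" for k
    using diag_mult_idempotent_finite_support[OF idem] that by blast
  then have "S = (\<lambda>p q. if p = 0 \<and> q = 0 then \<sigma> 0 else 0)"
    by (simp add: S_eq fun_eq_iff diag_series_def)
  moreover have "\<sigma> 0 \<in> {0, 1}"
    using number_state_eval_idempotent[OF idem, of 0] by (simp add: number_state_eval_def)
  ultimately show ?thesis
    by (auto simp: fun_eq_iff one_series_def)
qed

end
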